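(* (a) For $f(x_0,x_1;\alpha)=\tfrac12\log F(x_0,x_1;\alpha)$ one has $\partial f(x_0,x_1;\alpha)/\partial x_1=\partial f(x_1,x_0;\alpha)/\partial x_0$; hence, locally, there is a function $\Lambda(x_0,x_1;\alpha)$ with $\Lambda(x_0,x_1;\alpha)=\Lambda(x_1,x_0;\alpha)$ and $\partial\Lambda(x_0,x_1;\alpha)/\partial x_0=f(x_0,x_1;\alpha)$. (b) Let $\Gamma$ be a finite planar quad-graph with bipartite (black/white) vertex coloring and an edge labelling by complex parameters such that opposite edges of every face carry equal labels. For each face, list its vertices counterclockwise as $(x_0,x_1,x_2,x_3)$ with $x_0,x_2$ black, let $\alpha$ be the label of the edges $x_0x_1,x_2x_3$ and $\beta$ that of $x_0x_3,x_1x_2$, and associate to it the term $\Lambda(x_0,x_2;\alpha-\beta)$ (this does not depend on which black vertex is called $x_0$). Let $S=\sum_{\text{faces}}\Lambda(x_0,x_2;\alpha-\beta)$, a function of the fields on black vertices. Let $x_0$ be an interior black vertex with $n$ adjacent faces $(x_0,x_{2j-1},x_{2j},x_{2j+1})$, $j=1,\dots,n$, listed counterclockwise (indices of the white vertices mod $2n$), and let $\alpha_j$ be the label of the edge $(x_0,x_{2j-1})$, $\alpha_{n+1}=\alpha_1$. Then $$\frac{\partial S}{\partial x_0}=\sum_{j=1}^n f(x_0,x_{2j};\alpha_j-\alpha_{j+1}),$$ so the discrete Toda equations $\sum_{j=1}^n f(x_0,x_{2j};\alpha_j-\alpha_{j+1})=0$ at interior black vertices are the Euler–Lagrange equations of 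$S$.
   Context: $\sigma$: Weierstrass sigma function (invariants $g_2,g_3$, nondegenerate). $F(x_0,x_1;\alpha)=\frac{\sigma(x_0+x_1+\alpha)\sigma(x_0-x_1+\alpha)}{\sigma(x_0+x_1-\alpha)\sigma(x_0-x_1-\alpha)}$, and $f=\frac12\log F$ (a local branch). *)

theory Defs
  imports "HOL-Analysis.Analysis"
begin

text \<open>Period lattice generated by \<omega>1, \<omega>2; nondegenerate means Im(\<omega>2/\<omega>1) \<noteq> 0.
  Every nondegenerate pair of invariants g2, g3 arises from such a lattice.\<close>

definition nondeg_periods :: "complex \<Rightarrow> complex \<Rightarrow> bool" where
  "nondeg_periods \<omega>1 \<omega>2 \<longleftrightarrow> Im (\<omega>2 / \<omega>1) \<noteq> 0"

definition wsigma :: "complex \<Rightarrow> complex \<Rightarrow> complex \<Rightarrow> complex" where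
  "wsigma \<omega>1 \<omega>2 z =
     lim (\<lambda>N::nat. z * (\<Prod>(m, n) \<in> ({- int N..int N} \<times> {- int N..int N}) - {(0, 0)}.
        (1 - z / (of_int m * \<omega>1 + of_int n * \<omega>2)) *
        exp (z / (of_int m * \<omega>1 + of_int n * \<omega>2)
             + z ^ 2 / (2 * (of_int m * \<omega>1 + of_int n * \<omega>2) ^ 2))))"

definition bigF :: "complex \<Rightarrow> complex \<Rightarrow> complex \<Rightarrow> complex \<times> complex \<Rightarrow> complex" where
  "bigF \<omega>1 \<omega>2 \<alpha> p =
     (wsigma \<omega>1 \<omega>2 (fst p + snd p + \<alpha>) * wsigma \<omega>1 \<omega>2 (fst p - snd p + \<alpha>)) /
     (wsigma \<omega>1 \<omega>2 (fst p + snd p - \<alpha>) * wsigma \<omega>1 \<omega>2 (fst p - snd p - \<alpha>))"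

text \<open>f is a (continuous, hence holomorphic) branch of (1/2) log F on the open set U,
  on which F is finite and nonzero (F \<noteq> 0 here also forces the denominator to be \<noteq> 0).\<close>

definition half_log_branch ::
  "complex \<Rightarrow> complex \<Rightarrow> complex \<Rightarrow> (complex \<times> complex) set \<Rightarrow> (complex \<times> complex \<Rightarrow> complex) \<Rightarrow> bool" where
  "half_log_branch \<omega>1 \<omega>2 \<alpha> U f \<longleftrightarrow>
     open U \<and> continuous_on U f \<and>
     (\<forall>p\<in>U. bigF \<omega>1 \<omega>2 \<alpha> p \<noteq> 0 \<and> exp (2 * f p) = bigF \<omega>1 \<omega>2 \<alpha> p)"

text \<open>Quad-graph data: faces are stored as 4-tuples (x0,x1,x2,x3) listed counterclockwise,
  with x0 black; each face is stored once (not also in its rotated form (x2,x3,x0,x1)).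
  lab is the edge labelling (symmetric in its arguments).\<close>

definition quad_faces ::
  "('v \<times> 'v \<times> 'v \<times> 'v) set \<Rightarrow> ('v \<Rightarrow> bool) \<Rightarrow> ('v \<Rightarrow> 'v \<Rightarrow> complex) \<Rightarrow> bool" where
  "quad_faces Q black lab \<longleftrightarrow>
     finite Q \<and> (\<forall>x y. lab x y = lab y x) \<and>
     (\<forall>(a, b, c, d) \<in> Q. black a \<and> \<not> black b \<and> black c \<and> \<not> black d \<and>
        distinct [a, b, c, d] \<and> lab a b = lab c d \<and> lab a d = lab b c \<and>
        (c, d, a, b) \<notin> Q)"

definition interior_star ::
  "('v \<times> 'v \<times> 'v \<times> 'v) set \<Rightarrow> 'v \<Rightarrow> nat \<Rightarrow> (nat \<Rightarrow> 'v) \<Rightarrow> bool" where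
  "interior_star Q v n w \<longleftrightarrow>
     n \<ge> 1 \<and> w (2 * n + 1) = w 1 \<and>
     (\<exists>\<phi>. bij_betw \<phi> {1..n} {q \<in> Q. fst q = v \<or> fst (snd (snd q)) = v} \<and>
        (\<forall>j\<in>{1..n}. \<phi> j = (v, w (2*j - 1), w (2*j), w (2*j + 1)) \<or>
                     \<phi> j = (w (2*j), w (2*j + 1), v, w (2*j - 1))))"

definition action ::
  "(complex \<Rightarrow> complex \<times> complex \<Rightarrow> complex) \<Rightarrow> ('v \<Rightarrow> 'v \<Rightarrow> complex) \<Rightarrow>
   ('v \<times> 'v \<times> 'v \<times> 'v) set \<Rightarrow> ('v \<Rightarrow> complex) \<Rightarrow> complex" where
  "action Lam lab Q X = (\<Sum>(a, b, c, d) \<in> Q. Lam (lab a b - lab a d) (X a, X c))"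

end

theory Submission
  imports Defs "HOL-Complex_Analysis.Complex_Analysis"
begin

text \<open>
  With \<open>G(u) = \<sigma>(u + \<alpha>) / \<sigma>(u - \<alpha>)\<close> one has \<open>F(x\<^sub>0, x\<^sub>1) = G(x\<^sub>0 + x\<^sub>1) G(x\<^sub>0 - x\<^sub>1)\<close>, and oddness of \<open>\<sigma>\<close>
  gives \<open>G(-u) G(u) = 1\<close>, so \<open>F(x\<^sub>1, x\<^sub>0) = G(x\<^sub>0 + x\<^sub>1) / G(x\<^sub>0 - x\<^sub>1)\<close>.  Near any point a continuous
  branch therefore splits as \<open>2 f(x\<^sub>0, x\<^sub>1) = A(x\<^sub>0 + x\<^sub>1) + B(x\<^sub>0 - x\<^sub>1) + c\<close> and
  \<open>2 f(x\<^sub>1, x\<^sub>0) = A(x\<^sub>0 + x\<^sub>1) - B(x\<^sub>0 - x\<^sub>1) + c'\<close> with holomorphic logarithms \<open>A\<close>, \<open>B\<close> of \<open>G\<close>.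
  Both cross derivatives in (a) are then \<open>(A' - B') / 2\<close>, and with primitives \<open>A\<^sub>1\<close>, \<open>B\<^sub>1\<close> the
  function \<open>P = (A\<^sub>1(x\<^sub>0 + x\<^sub>1) + B\<^sub>1(x\<^sub>0 - x\<^sub>1) + c x\<^sub>0 + c' x\<^sub>1) / 2\<close> has \<open>\<partial>\<^sub>0 P = f(x\<^sub>0, x\<^sub>1)\<close> and
  \<open>\<partial>\<^sub>1 P = f(x\<^sub>1, x\<^sub>0)\<close>; symmetrising \<open>P\<close> on a swap-invariant neighbourhood gives \<open>\<Lambda>\<close>.

  For (b), only the \<open>n\<close> faces around \<open>x\<^sub>0\<close> depend on \<open>x\<^sub>0\<close>.  Whichever black vertex of such a
  face is listed first, its label difference is \<open>\<alpha>\<^sub>j - \<alpha>\<^sub>j\<^sub>+\<^sub>1\<close>, so by the symmetry of \<open>\<Lambda>\<close> it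
  contributes \<open>f(x\<^sub>0, x\<^sub>2\<^sub>j; \<alpha>\<^sub>j - \<alpha>\<^sub>j\<^sub>+\<^sub>1)\<close>.

  That \<open>\<sigma>\<close> is entire and odd comes from its product: grouping the square partial products
  into lattice rings, ring \<open>k\<close> contributes a factor \<open>1 + O(k\<^sup>-\<^sup>2)\<close> uniformly on discs.
\<close>

section \<open>Products, logarithms and primitives\<close>

lemma norm_prod_one_plus_minus_1_le:
  fixes u :: "'a \<Rightarrow> complex"
  assumes "finite A"
  defines "y \<equiv> \<Sum>q\<in>A. norm (u q)"
  shows "norm ((\<Prod>q\<in>A. 1 + u q) - 1) \<le> y * exp y"
proof -
  obtain h where h: "bij_betw h {0..<card A} A"
    using assms ex_bij_betw_nat_finite by blast
  have "norm ((\<Prod>i\<in>{0..<card A}. 1 + u (h i)) - 1) \<le> (\<Prod>i\<in>{0..<card A}. 1 + norm (u (h i))) - 1"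
    by (rule norm_prod_minus1_le_prod_minus1)
  then have "norm ((\<Prod>q\<in>A. 1 + u q) - 1) \<le> (\<Prod>q\<in>A. 1 + norm (u q)) - 1"
    using prod.reindex_bij_betw[OF h, of "\<lambda>q. 1 + u q"] prod.reindex_bij_betw[OF h, of "\<lambda>q. 1 + norm (u q)"]
    by simp
  also have "\<dots> \<le> exp y - 1"
    unfolding y_def using prod_le_exp_sum[of A "\<lambda>q. norm (u q)"] by simp
  also have "\<dots> \<le> y * exp y"
    \<comment> \<open>\<open>1 - y \<le> exp (- y)\<close>, multiplied by \<open>exp y\<close>\<close>
    using exp_ge_add_one_self[of "- y"] by (simp add: exp_minus field_simps)
  finally show ?thesis .
qed

lemma norm_weierstrass_factor_2_minus_1_le:
  assumes "0 < r" "r \<le> norm w" "norm z \<le> R" "2 * R \<le> r"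
  shows "norm (weierstrass_factor 2 (z / w) - 1) \<le> 3 * (R / r) ^ 3"
proof -
  have "0 \<le> R" using order_trans[OF norm_ge_zero assms(3)] .
  then have "norm (z / w) \<le> R / r"
    unfolding norm_divide using assms by (intro frac_le) auto
  moreover have "R / r \<le> 1 / 2" using assms(1,4) by (simp add: divide_le_eq)
  ultimately have "norm (weierstrass_factor 2 (z / w) - 1) \<le> 3 * norm (z / w) ^ Suc 2"
    by (intro weierstrass_factor_bound) linarith
  also have "\<dots> \<le> 3 * (R / r) ^ Suc 2"
    using \<open>norm (z / w) \<le> R / r\<close> by (intro mult_left_mono power_mono) auto
  finally show ?thesis by (simp add: numeral_3_eq_3)
qed

lemma continuous_logs_differ_by_constant:
  fixes h k :: "'a::topological_space \<Rightarrow> complex"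
  assumes "connected S" "continuous_on S h" "continuous_on S k" "\<And>x. x \<in> S \<Longrightarrow> exp (h x) = exp (k x)"
  obtains c where "\<And>x. x \<in> S \<Longrightarrow> h x = k x + c"
proof -
  have "(\<lambda>x. h x - k x) constant_on S"
  proof (rule continuous_discrete_range_constant[OF assms(1)])
    show "continuous_on S (\<lambda>x. h x - k x)" by (intro continuous_intros assms(2,3))
    fix x assume "x \<in> S"
    have "2 * pi \<le> norm ((h y - k y) - (h x - k x))" if "y \<in> S" "h y - k y \<noteq> h x - k x" for y
    proof -
      have "exp (h y - k y) = exp (h x - k x)"
        using assms(4) \<open>x \<in> S\<close> \<open>y \<in> S\<close> by (simp add: exp_diff)
      then obtain n :: int where n: "h y - k y = h x - k x + of_int (2 * n) * pi * \<i>"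
        by (auto simp: exp_eq)
      with that(2) have "n \<noteq> 0" by auto
      then show ?thesis by (simp add: n norm_mult abs_mult)
    qed
    then show "\<exists>e>0. \<forall>y. y \<in> S \<and> h y - k y \<noteq> h x - k x \<longrightarrow> e \<le> norm ((h y - k y) - (h x - k x))"
      by (intro exI[of _ "2 * pi"]) auto
  qed
  then show ?thesis using that by (fastforce simp: constant_on_def algebra_simps)
qed

lemma holomorphic_log_on_ball:
  assumes "open W" "H holomorphic_on W" "\<And>u. u \<in> W \<Longrightarrow> H u \<noteq> 0" "u \<in> W"
  obtains r L where "r > 0" "ball u r \<subseteq> W" "L holomorphic_on ball u r"
    "\<And>v. v \<in> ball u r \<Longrightarrow> exp (L v) = H v"
proof -
  obtain r where r: "r > 0" "ball u r \<subseteq> W"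
    using assms(1,4) open_contains_ball by blast
  moreover obtain L where "L holomorphic_on ball u r" "\<And>v. v \<in> ball u r \<Longrightarrow> H v = exp (L v)"
  proof (rule contractible_imp_holomorphic_log)
    show "H holomorphic_on ball u r" using assms(2) r(2) by (rule holomorphic_on_subset)
    show "\<And>v. v \<in> ball u r \<Longrightarrow> H v \<noteq> 0" using assms(3) r(2) by blast
  qed (auto intro: convex_imp_contractible)
  ultimately show ?thesis using that by metis
qed

lemma holomorphic_primitive_on_ball:
  assumes "A holomorphic_on ball c r"
  obtains P where "\<And>u. u \<in> ball c r \<Longrightarrow> (P has_field_derivative A u) (at u)"
proof -
  obtain P where P: "\<And>u. u \<in> ball c r \<Longrightarrow> (P has_field_derivative A u) (at u within ball c r)"
    by (rule holomorphic_convex_primitive'[OF convex_ball open_ball assms]) (rule that)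
  have "(P has_field_derivative A u) (at u)" if "u \<in> ball c r" for u
    using P[OF that] by (simp add: at_within_open[OF that open_ball])
  then show ?thesis by (rule that)
qed

lemma sum_diff_in_balls:
  fixes x y a b :: "'a::real_normed_vector"
  assumes "x \<in> ball a \<epsilon>" "y \<in> ball b \<epsilon>"
  shows "x + y \<in> ball (a + b) (2 * \<epsilon>)" "x - y \<in> ball (a - b) (2 * \<epsilon>)"
  using assms unfolding mem_ball dist_norm by norm+

lemma continuous_on_compose_sum_diff:
  fixes A B :: "complex \<Rightarrow> complex"
  shows "A holomorphic_on ball (a + b) (2 * \<epsilon>) \<Longrightarrow>
           continuous_on (ball a \<epsilon> \<times> ball b \<epsilon>) (\<lambda>q. A (fst q + snd q))"
    and "B holomorphic_on ball (a - b) (2 * \<epsilon>) \<Longrightarrow>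
           continuous_on (ball a \<epsilon> \<times> ball b \<epsilon>) (\<lambda>q. B (fst q - snd q))"
  by (rule continuous_on_compose2[OF holomorphic_on_imp_continuous_on],
      assumption, auto intro!: continuous_intros dest: sum_diff_in_balls)+

lemma symmetric_primitive_from_partials:
  fixes P f :: "'a::real_normed_field \<times> 'a \<Rightarrow> 'a"
  assumes "open S" "open T" "S = T \<or> S \<inter> T = {}"
    and P1: "\<And>x y. x \<in> S \<Longrightarrow> y \<in> T \<Longrightarrow> ((\<lambda>t. P (t, y)) has_field_derivative f (x, y)) (at x)"
    and P2: "\<And>x y. x \<in> S \<Longrightarrow> y \<in> T \<Longrightarrow> ((\<lambda>t. P (x, t)) has_field_derivative f (y, x)) (at y)"
  obtains \<Lambda> where "\<And>q. q \<in> S \<times> T \<union> T \<times> S \<Longrightarrow> \<Lambda> q = \<Lambda> (prod.swap q)"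
    "\<And>x y. (x, y) \<in> S \<times> T \<union> T \<times> S \<Longrightarrow> ((\<lambda>t. \<Lambda> (t, y)) has_field_derivative f (x, y)) (at x)"
  using assms(3)
proof
  assume "S = T"
  define \<Lambda> where "\<Lambda> q = (P q + P (prod.swap q)) / 2" for q
  show thesis
  proof (rule that[of \<Lambda>])
    show "\<Lambda> q = \<Lambda> (prod.swap q)" for q
      by (simp add: \<Lambda>_def add.commute)
    show "((\<lambda>t. \<Lambda> (t, y)) has_field_derivative f (x, y)) (at x)" if "(x, y) \<in> S \<times> T \<union> T \<times> S" for x y
    proof -
      have "((\<lambda>t. (P (t, y) + P (y, t)) / 2) has_field_derivative (f (x, y) + f (x, y)) / 2) (at x)"
        using that \<open>S = T\<close> by (intro DERIV_cdivide DERIV_add P1 P2) auto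
      then show ?thesis by (simp add: \<Lambda>_def)
    qed
  qed
next
  assume disjoint: "S \<inter> T = {}"
  define \<Lambda> where "\<Lambda> q = (if q \<in> S \<times> T then P q else P (prod.swap q))" for q
  show thesis
  proof (rule that[of \<Lambda>])
    show "\<Lambda> q = \<Lambda> (prod.swap q)" if "q \<in> S \<times> T \<union> T \<times> S" for q
      using that disjoint by (cases q) (auto simp: \<Lambda>_def)
    show "((\<lambda>t. \<Lambda> (t, y)) has_field_derivative f (x, y)) (at x)" if "(x, y) \<in> S \<times> T \<union> T \<times> S" for x y
    proof (cases "x \<in> S")
      case True
      with that have "y \<in> T" using disjoint by auto
      show ?thesis
        using \<open>y \<in> T\<close> by (intro has_field_derivative_transform_within_open[OF P1[OF True] \<open>open S\<close> True])
                          (auto simp: \<Lambda>_def)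
    next
      case False
      with that have "x \<in> T" "y \<in> S" by auto
      show ?thesis
        using \<open>y \<in> S\<close> disjoint
        by (intro has_field_derivative_transform_within_open[OF P2[OF \<open>y \<in> S\<close> \<open>x \<in> T\<close>] \<open>open T\<close> \<open>x \<in> T\<close>])
           (auto simp: \<Lambda>_def)
    qed
  qed
qed

lemma has_field_derivative_swap_symmetric:
  assumes "open V" "\<And>p. p \<in> V \<Longrightarrow> \<Lambda> p = \<Lambda> (prod.swap p)" "(a, b) \<in> V"
    and "((\<lambda>x. \<Lambda> (x, b)) has_field_derivative D) (at a)"
  shows "((\<lambda>y. \<Lambda> (b, y)) has_field_derivative D) (at a)"
proof (rule has_field_derivative_transform_within_open[OF assms(4)])
  show "open ((\<lambda>z. (z, b)) -` V)"
    by (rule open_vimage[OF assms(1)]) (intro continuous_intros)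
  show "a \<in> (\<lambda>z. (z, b)) -` V" using assms(3) by simp
  show "\<Lambda> (z, b) = \<Lambda> (b, z)" if "z \<in> (\<lambda>z. (z, b)) -` V" for z
    using assms(2) that by fastforce
qed

section \<open>The sigma product\<close>

definition lattice_point :: "complex \<Rightarrow> complex \<Rightarrow> int \<times> int \<Rightarrow> complex" where
  "lattice_point \<omega>1 \<omega>2 q = of_int (fst q) * \<omega>1 + of_int (snd q) * \<omega>2"

definition lattice_square :: "nat \<Rightarrow> (int \<times> int) set" where
  "lattice_square N = {- int N..int N} \<times> {- int N..int N}"

definition sigma_partial :: "complex \<Rightarrow> complex \<Rightarrow> nat \<Rightarrow> complex \<Rightarrow> complex" where
  "sigma_partial \<omega>1 \<omega>2 N z =
     (\<Prod>q \<in> lattice_square N - {(0, 0)}. weierstrass_factor 2 (z / lattice_point \<omega>1 \<omega>2 q))"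

definition sigma_ring :: "complex \<Rightarrow> complex \<Rightarrow> nat \<Rightarrow> complex \<Rightarrow> complex" where
  "sigma_ring \<omega>1 \<omega>2 k z =
     (\<Prod>q \<in> lattice_square (Suc k) - lattice_square k. weierstrass_factor 2 (z / lattice_point \<omega>1 \<omega>2 q))"

definition sigma_product :: "complex \<Rightarrow> complex \<Rightarrow> complex \<Rightarrow> complex" where
  "sigma_product \<omega>1 \<omega>2 z = lim (\<lambda>N. sigma_partial \<omega>1 \<omega>2 N z)"

lemma wsigma_eq_lim_sigma_partial:
  "wsigma \<omega>1 \<omega>2 z = lim (\<lambda>N. z * sigma_partial \<omega>1 \<omega>2 N z)"
proof -
  have "{1..2::nat} = {1, 2}" by auto
  then have "weierstrass_factor 2 (z / w) = (1 - z / w) * exp (z / w + z ^ 2 / (2 * w ^ 2))" for w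
    by (simp add: weierstrass_factor_def power_divide mult.commute)
  then show ?thesis
    by (simp add: wsigma_def sigma_partial_def lattice_square_def lattice_point_def case_prod_unfold)
qed

lemma finite_lattice_square [simp]: "finite (lattice_square N)"
  by (simp add: lattice_square_def)

lemma lattice_square_mono: "lattice_square N \<subseteq> lattice_square (Suc N)"
  by (auto simp: lattice_square_def)

lemma card_lattice_ring: "card (lattice_square (Suc k) - lattice_square k) = 8 * k + 8"
proof -
  have card_square: "card (lattice_square N) = (2 * N + 1) ^ 2" for N
  proof -
    have "card {- int N..int N} = 2 * N + 1" by simp
    then show ?thesis by (simp add: lattice_square_def card_cartesian_product power2_eq_square)
  qed
  show ?thesis
    using lattice_square_mono[of k]
    by (simp add: card_Diff_subset card_square power2_eq_square algebra_simps)
qed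

lemma sigma_partial_eq_prod_rings:
  "sigma_partial \<omega>1 \<omega>2 N z = (\<Prod>k<N. sigma_ring \<omega>1 \<omega>2 k z)"
proof (induction N)
  case 0
  have "lattice_square 0 = {(0, 0)}" by (auto simp: lattice_square_def)
  then show ?case by (simp add: sigma_partial_def)
next
  case (Suc N)
  have "lattice_square (Suc N) - {(0, 0)} =
          (lattice_square N - {(0, 0)}) \<union> (lattice_square (Suc N) - lattice_square N)"
    using lattice_square_mono[of N] by (auto simp: lattice_square_def)
  then have "sigma_partial \<omega>1 \<omega>2 (Suc N) z = sigma_partial \<omega>1 \<omega>2 N z * sigma_ring \<omega>1 \<omega>2 N z"
    unfolding sigma_partial_def sigma_ring_def by (subst prod.union_disjoint[symmetric]) auto
  with Suc show ?case by simp
qed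

lemma lattice_point_norm_outside_square:
  assumes "nondeg_periods \<omega>1 \<omega>2"
  obtains c where "c > 0"
    "\<And>k q. q \<notin> lattice_square k \<Longrightarrow> c * (real k + 1) \<le> norm (lattice_point \<omega>1 \<omega>2 q)"
proof -
  define D where "D = Im (\<omega>2 * cnj \<omega>1)"
  have "\<omega>1 \<noteq> 0" using assms by (auto simp: nondeg_periods_def)
  moreover have "Im (\<omega>2 / \<omega>1) = D / (cmod \<omega>1)\<^sup>2"
    by (simp add: D_def Im_divide cmod_power2)
  ultimately have "D \<noteq> 0" "norm \<omega>1 + norm \<omega>2 > 0"
    using assms by (auto simp: nondeg_periods_def add_pos_nonneg)
  define c where "c = \<bar>D\<bar> / (norm \<omega>1 + norm \<omega>2)"
  have "c > 0" using \<open>D \<noteq> 0\<close> \<open>norm \<omega>1 + norm \<omega>2 > 0\<close> by (simp add: c_def)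
  moreover have "c * (real k + 1) \<le> norm (lattice_point \<omega>1 \<omega>2 q)" if "q \<notin> lattice_square k" for k q
  proof -
    obtain m n where q: "q = (m, n)" by force
    let ?x = "lattice_point \<omega>1 \<omega>2 q"
    \<comment> \<open>The imaginary parts of \<open>?x cnj \<omega>1\<close> and \<open>?x cnj \<omega>2\<close> isolate the two coordinates.\<close>
    have "Im (?x * cnj \<omega>1) = of_int n * D" "Im (?x * cnj \<omega>2) = - of_int m * D"
      by (simp_all add: q lattice_point_def D_def algebra_simps)
    then have "\<bar>of_int n\<bar> * \<bar>D\<bar> \<le> norm ?x * norm \<omega>1" "\<bar>of_int m\<bar> * \<bar>D\<bar> \<le> norm ?x * norm \<omega>2"
      by (metis abs_Im_le_cmod abs_mult complex_mod_cnj norm_mult abs_minus_cancel mult_minus_left)+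
    then have "max \<bar>of_int m\<bar> \<bar>of_int n\<bar> * \<bar>D\<bar> \<le> norm ?x * (norm \<omega>1 + norm \<omega>2)"
      by (auto simp: max_def distrib_left intro: order.trans[OF _ add_increasing] order.trans[OF _ add_increasing2])
    moreover have "real k + 1 \<le> max \<bar>of_int m\<bar> \<bar>of_int n\<bar>"
      using that by (auto simp: q lattice_square_def)
    ultimately have "(real k + 1) * \<bar>D\<bar> \<le> norm ?x * (norm \<omega>1 + norm \<omega>2)"
      by (meson abs_ge_zero mult_right_mono order_trans)
    then show ?thesis
      using \<open>norm \<omega>1 + norm \<omega>2 > 0\<close> by (simp add: c_def field_simps)
  qed
  ultimately show ?thesis using that by blast
qed

lemma lattice_point_nonzero:
  assumes "nondeg_periods \<omega>1 \<omega>2" "q \<noteq> (0, 0)"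
  shows "lattice_point \<omega>1 \<omega>2 q \<noteq> 0"
proof -
  obtain c where "c > 0"
    "\<And>k q. q \<notin> lattice_square k \<Longrightarrow> c * (real k + 1) \<le> norm (lattice_point \<omega>1 \<omega>2 q)"
    using lattice_point_norm_outside_square[OF assms(1)] by blast
  moreover have "q \<notin> lattice_square 0" using assms(2) by (auto simp: lattice_square_def)
  ultimately have "0 < norm (lattice_point \<omega>1 \<omega>2 q)" by (smt (verit) of_nat_0 mult_pos_pos)
  then show ?thesis by simp
qed

lemma norm_sigma_ring_minus_1_le:
  assumes c: "c > 0" "\<And>k q. q \<notin> lattice_square k \<Longrightarrow> c * (real k + 1) \<le> norm (lattice_point \<omega>1 \<omega>2 q)"
    and k: "2 * R \<le> c * (real k + 1)" and z: "norm z \<le> R"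
  defines "C \<equiv> 24 * R ^ 3 / c ^ 3"
  shows "norm (sigma_ring \<omega>1 \<omega>2 k z - 1) \<le> C * exp C / (real k + 1) ^ 2"
proof -
  let ?ring = "lattice_square (Suc k) - lattice_square k"
  let ?u = "\<lambda>q. weierstrass_factor 2 (z / lattice_point \<omega>1 \<omega>2 q) - 1"
  define K where "K = real k + 1"
  have "K > 0" "R \<ge> 0" using order_trans[OF norm_ge_zero z] by (auto simp: K_def)
  define y where "y = (\<Sum>q\<in>?ring. norm (?u q))"
  have "y \<le> (\<Sum>q\<in>?ring. 3 * (R / (c * K)) ^ 3)"
    unfolding y_def K_def using c k z
    by (intro sum_mono norm_weierstrass_factor_2_minus_1_le) auto
  also have "\<dots> = 8 * K * (3 * (R / (c * K)) ^ 3)"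
    by (simp add: card_lattice_ring K_def)
  also have "\<dots> = C / K ^ 2"
    using c(1) \<open>K > 0\<close> by (simp add: C_def field_simps power2_eq_square power3_eq_cube)
  finally have "y \<le> C / K ^ 2" .
  moreover have "C \<ge> 0" using c(1) \<open>R \<ge> 0\<close> by (simp add: C_def)
  moreover have "C / K ^ 2 \<le> C / 1"
    using \<open>C \<ge> 0\<close> \<open>K > 0\<close> by (intro divide_left_mono) (auto simp: K_def)
  ultimately have "y * exp y \<le> C / K ^ 2 * exp C"
    by (intro mult_mono) (auto simp: y_def intro: sum_nonneg)
  moreover have "norm (sigma_ring \<omega>1 \<omega>2 k z - 1) \<le> y * exp y"
    using norm_prod_one_plus_minus_1_le[of ?ring ?u] by (simp add: sigma_ring_def y_def)
  ultimately have "norm (sigma_ring \<omega>1 \<omega>2 k z - 1) \<le> C / K ^ 2 * exp C"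
    by linarith
  then show ?thesis by (simp add: K_def)
qed

lemma sigma_partial_holomorphic:
  assumes "nondeg_periods \<omega>1 \<omega>2"
  shows "sigma_partial \<omega>1 \<omega>2 N holomorphic_on A"
  unfolding sigma_partial_def[abs_def] using lattice_point_nonzero[OF assms]
  by (intro holomorphic_intros) auto

lemma sigma_partial_uniform_limit:
  assumes "nondeg_periods \<omega>1 \<omega>2"
  shows "uniform_limit (cball 0 R) (sigma_partial \<omega>1 \<omega>2) (sigma_product \<omega>1 \<omega>2) sequentially"
proof -
  obtain c where c: "c > 0"
    "\<And>k q. q \<notin> lattice_square k \<Longrightarrow> c * (real k + 1) \<le> norm (lattice_point \<omega>1 \<omega>2 q)"
    using lattice_point_norm_outside_square[OF assms] by blast
  define C where "C = 24 * R ^ 3 / c ^ 3"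
  have "\<forall>\<^sub>F k in sequentially. \<forall>z\<in>cball 0 R.
          norm (norm (sigma_ring \<omega>1 \<omega>2 k z - 1)) \<le> C * exp C * inverse (real (Suc k) ^ 2)"
  proof -
    have "\<forall>\<^sub>F k in sequentially. nat \<lceil>2 * R / c\<rceil> \<le> k"
      by (rule eventually_ge_at_top)
    then show ?thesis
    proof eventually_elim
      case (elim k)
      then have "2 * R / c \<le> real k"
        using real_nat_ceiling_ge[of "2 * R / c"] by linarith
      then have "2 * R \<le> c * (real k + 1)"
        using c(1) by (simp add: divide_le_eq algebra_simps)
      then show ?case
        using norm_sigma_ring_minus_1_le[OF c] by (simp add: C_def field_simps)
    qed
  qed
  moreover have "summable (\<lambda>k. C * exp C * inverse (real (Suc k) ^ 2))"
  proof -
    have "summable (\<lambda>k. inverse (real k ^ 2))" by (rule inverse_power_summable) auto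
    then have "summable (\<lambda>k. inverse (real (Suc k) ^ 2))" by (subst summable_Suc_iff)
    then show ?thesis by (rule summable_mult)
  qed
  ultimately have "uniformly_convergent_on (cball 0 R) (\<lambda>N z. \<Sum>k<N. norm (sigma_ring \<omega>1 \<omega>2 k z - 1))"
    by (rule Weierstrass_m_test'_ev)
  then have "uniformly_convergent_on (cball 0 R) (\<lambda>N z. \<Prod>k<N. sigma_ring \<omega>1 \<omega>2 k z)"
    using lattice_point_nonzero[OF assms]
    by (intro uniformly_convergent_on_prod' holomorphic_on_imp_continuous_on)
       (auto simp: sigma_ring_def[abs_def] lattice_square_def intro!: holomorphic_intros)
  moreover have "sigma_partial \<omega>1 \<omega>2 = (\<lambda>N z. \<Prod>k<N. sigma_ring \<omega>1 \<omega>2 k z)"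
    by (simp add: fun_eq_iff sigma_partial_eq_prod_rings)
  ultimately show ?thesis
    by (simp add: uniformly_convergent_uniform_limit_iff sigma_product_def[abs_def])
qed

lemma sigma_product_holomorphic:
  assumes "nondeg_periods \<omega>1 \<omega>2"
  shows "sigma_product \<omega>1 \<omega>2 holomorphic_on A"
proof -
  have "sigma_product \<omega>1 \<omega>2 holomorphic_on UNIV"
  proof (rule holomorphic_uniform_sequence[where f = "sigma_partial \<omega>1 \<omega>2"])
    fix x :: complex
    have "uniform_limit (cball x 1) (sigma_partial \<omega>1 \<omega>2) (sigma_product \<omega>1 \<omega>2) sequentially"
      by (rule uniform_limit_on_subset[OF sigma_partial_uniform_limit[OF assms, of "norm x + 1"]])
         (simp add: cball_subset_cball_iff)
    then show "\<exists>d>0. cball x d \<subseteq> UNIV \<and>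
                 uniform_limit (cball x d) (sigma_partial \<omega>1 \<omega>2) (sigma_product \<omega>1 \<omega>2) sequentially"
      by (intro exI[of _ 1]) auto
  qed (auto intro: sigma_partial_holomorphic[OF assms])
  then show ?thesis by (rule holomorphic_on_subset) auto
qed

lemma wsigma_eq_sigma_product:
  assumes "nondeg_periods \<omega>1 \<omega>2"
  shows "wsigma \<omega>1 \<omega>2 z = z * sigma_product \<omega>1 \<omega>2 z"
proof -
  have "(\<lambda>N. sigma_partial \<omega>1 \<omega>2 N z) \<longlonglongrightarrow> sigma_product \<omega>1 \<omega>2 z"
    by (rule tendsto_uniform_limitI[OF sigma_partial_uniform_limit[OF assms, of "norm z"]]) auto
  then show ?thesis
    unfolding wsigma_eq_lim_sigma_partial by (intro limI tendsto_mult_left)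
qed

lemma wsigma_holomorphic:
  assumes "nondeg_periods \<omega>1 \<omega>2"
  shows "wsigma \<omega>1 \<omega>2 holomorphic_on A"
  unfolding wsigma_eq_sigma_product[OF assms, abs_def]
  by (intro holomorphic_intros sigma_product_holomorphic[OF assms])

lemma wsigma_minus:
  assumes "nondeg_periods \<omega>1 \<omega>2"
  shows "wsigma \<omega>1 \<omega>2 (- z) = - wsigma \<omega>1 \<omega>2 z"
proof -
  have "lattice_point \<omega>1 \<omega>2 (- q) = - lattice_point \<omega>1 \<omega>2 q" for q
    by (simp add: lattice_point_def)
  then have "sigma_partial \<omega>1 \<omega>2 N (- z) = sigma_partial \<omega>1 \<omega>2 N z" for N
    unfolding sigma_partial_def
    by (intro prod.reindex_bij_witness[where i = uminus and j = uminus])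
       (auto simp: lattice_square_def)
  then show ?thesis
    by (simp add: wsigma_eq_sigma_product[OF assms] sigma_product_def)
qed

lemma wsigma_shift_holomorphic:
  assumes "nondeg_periods \<omega>1 \<omega>2"
  shows "(\<lambda>u. wsigma \<omega>1 \<omega>2 (u + c)) holomorphic_on A"
proof -
  have "(wsigma \<omega>1 \<omega>2 \<circ> (\<lambda>u. u + c)) holomorphic_on A"
    by (intro holomorphic_on_compose holomorphic_intros wsigma_holomorphic[OF assms])
  then show ?thesis by (simp add: o_def)
qed

section \<open>Local potentials of branches of \<open>log (G(x + y) G(x - y))\<close>\<close>

locale sum_difference_log_branch =
  fixes W :: "complex set" and G :: "complex \<Rightarrow> complex"
    and U :: "(complex \<times> complex) set" and f :: "complex \<times> complex \<Rightarrow> complex"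
  assumes open_W: "open W" and G_holomorphic: "G holomorphic_on W"
    and G_uminus_mult: "\<And>u. u \<in> W \<Longrightarrow> G (- u) * G u = 1"
    and open_U: "open U" and continuous_f: "continuous_on U f" and swap_U: "prod.swap ` U = U"
    and exp_2f: "\<And>x y. (x, y) \<in> U \<Longrightarrow>
                  x + y \<in> W \<and> x - y \<in> W \<and> exp (2 * f (x, y)) = G (x + y) * G (x - y)"
begin

lemma G_nonzero: "u \<in> W \<Longrightarrow> G u \<noteq> 0"
  using G_uminus_mult by force

lemma swap_in_U: "(x, y) \<in> U \<Longrightarrow> (y, x) \<in> U"
  using swap_U by (metis image_eqI swap_simp)

lemma exp_2f_swap:
  assumes "(x, y) \<in> U"
  shows "exp (2 * f (y, x)) = G (x + y) / G (x - y)"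
proof -
  have "x - y \<in> W" "(y, x) \<in> U" using exp_2f[OF assms] swap_in_U[OF assms] by auto
  then have "G (y - x) = 1 / G (x - y)"
    using G_uminus_mult[of "x - y"] G_nonzero by (simp add: field_simps)
  then show ?thesis using exp_2f[of y x] \<open>(y, x) \<in> U\<close> by (simp add: add.commute divide_inverse)
qed

lemma local_logs_of_G:
  assumes "(a, b) \<in> U" "\<delta> > 0"
  obtains \<epsilon> A B where "0 < \<epsilon>" "\<epsilon> \<le> \<delta>" "ball a \<epsilon> \<times> ball b \<epsilon> \<subseteq> U"
    "A holomorphic_on ball (a + b) (2 * \<epsilon>)" "\<And>u. u \<in> ball (a + b) (2 * \<epsilon>) \<Longrightarrow> exp (A u) = G u"
    "B holomorphic_on ball (a - b) (2 * \<epsilon>)" "\<And>u. u \<in> ball (a - b) (2 * \<epsilon>) \<Longrightarrow> exp (B u) = G u"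
proof -
  have "a + b \<in> W" "a - b \<in> W" using exp_2f[OF assms(1)] by auto
  obtain r1 A where A: "r1 > 0" "ball (a + b) r1 \<subseteq> W" "A holomorphic_on ball (a + b) r1"
      "\<And>u. u \<in> ball (a + b) r1 \<Longrightarrow> exp (A u) = G u"
    using holomorphic_log_on_ball[OF open_W G_holomorphic G_nonzero \<open>a + b \<in> W\<close>] by blast
  obtain r2 B where B: "r2 > 0" "ball (a - b) r2 \<subseteq> W" "B holomorphic_on ball (a - b) r2"
      "\<And>u. u \<in> ball (a - b) r2 \<Longrightarrow> exp (B u) = G u"
    using holomorphic_log_on_ball[OF open_W G_holomorphic G_nonzero \<open>a - b \<in> W\<close>] by blast
  obtain P Q where PQ: "open P" "open Q" "(a, b) \<in> P \<times> Q" "P \<times> Q \<subseteq> U"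
    using open_prod_elim[OF open_U assms(1)] by blast
  obtain e1 where e1: "e1 > 0" "ball a e1 \<subseteq> P" using PQ(1,3) open_contains_ball by blast
  obtain e2 where e2: "e2 > 0" "ball b e2 \<subseteq> Q" using PQ(2,3) open_contains_ball by blast
  define \<epsilon> where "\<epsilon> = Min {\<delta>, e1, e2, r1 / 2, r2 / 2}"
  have "ball a \<epsilon> \<subseteq> P" "ball b \<epsilon> \<subseteq> Q" using e1 e2 by (auto simp: \<epsilon>_def)
  then have "ball a \<epsilon> \<times> ball b \<epsilon> \<subseteq> U" using PQ(4) by blast
  moreover have "ball (a + b) (2 * \<epsilon>) \<subseteq> ball (a + b) r1" "ball (a - b) (2 * \<epsilon>) \<subseteq> ball (a - b) r2"
    by (auto simp: \<epsilon>_def)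
  moreover have "\<epsilon> > 0" "\<epsilon> \<le> \<delta>" using assms(2) e1 e2 A(1) B(1) by (auto simp: \<epsilon>_def)
  ultimately show ?thesis
    by (intro that[of \<epsilon> A B] holomorphic_on_subset[OF A(3)] holomorphic_on_subset[OF B(3)] A(4) B(4)) auto
qed

lemma local_log_decomposition:
  assumes ab: "(a, b) \<in> U" and "\<delta> > 0"
  obtains \<epsilon> A B c1 c2 where "0 < \<epsilon>" "\<epsilon> \<le> \<delta>" "ball a \<epsilon> \<times> ball b \<epsilon> \<subseteq> U"
    "A holomorphic_on ball (a + b) (2 * \<epsilon>)" "B holomorphic_on ball (a - b) (2 * \<epsilon>)"
    "\<And>x y. x \<in> ball a \<epsilon> \<Longrightarrow> y \<in> ball b \<epsilon> \<Longrightarrow> 2 * f (x, y) = A (x + y) + B (x - y) + c1"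
    "\<And>x y. x \<in> ball a \<epsilon> \<Longrightarrow> y \<in> ball b \<epsilon> \<Longrightarrow> 2 * f (y, x) = A (x + y) - B (x - y) + c2"
proof -
  obtain \<epsilon> A B where \<epsilon>: "0 < \<epsilon>" "\<epsilon> \<le> \<delta>" and V: "ball a \<epsilon> \<times> ball b \<epsilon> \<subseteq> U"
    and A: "A holomorphic_on ball (a + b) (2 * \<epsilon>)" "\<And>u. u \<in> ball (a + b) (2 * \<epsilon>) \<Longrightarrow> exp (A u) = G u"
    and B: "B holomorphic_on ball (a - b) (2 * \<epsilon>)" "\<And>u. u \<in> ball (a - b) (2 * \<epsilon>) \<Longrightarrow> exp (B u) = G u"
    using local_logs_of_G[OF assms] by blast
  let ?V = "ball a \<epsilon> \<times> ball b \<epsilon>"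
  have conn: "connected ?V"
    by (intro convex_connected convex_Times convex_ball)
  have cont: "continuous_on ?V (\<lambda>q. A (fst q + snd q))" "continuous_on ?V (\<lambda>q. B (fst q - snd q))"
    "continuous_on ?V (\<lambda>q. 2 * f q)" "continuous_on ?V (\<lambda>q. 2 * f (snd q, fst q))"
  proof -
    show "continuous_on ?V (\<lambda>q. A (fst q + snd q))" "continuous_on ?V (\<lambda>q. B (fst q - snd q))"
      using continuous_on_compose_sum_diff A(1) B(1) by blast+
    show "continuous_on ?V (\<lambda>q. 2 * f q)"
      by (intro continuous_intros continuous_on_subset[OF continuous_f V])
    show "continuous_on ?V (\<lambda>q. 2 * f (snd q, fst q))"
      using V swap_in_U by (intro continuous_intros continuous_on_compose2[OF continuous_f]) auto
  qed
  have exps: "exp (2 * f q) = exp (A (fst q + snd q) + B (fst q - snd q))"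
    "exp (2 * f (snd q, fst q)) = exp (A (fst q + snd q) - B (fst q - snd q))"
    if qV: "q \<in> ?V" for q
  proof -
    obtain x y where q: "q = (x, y)" and xy: "x \<in> ball a \<epsilon>" "y \<in> ball b \<epsilon>"
      using qV by (cases q) auto
    have "exp (A (x + y)) = G (x + y)" "exp (B (x - y)) = G (x - y)"
      using A(2)[OF sum_diff_in_balls(1)[OF xy]] B(2)[OF sum_diff_in_balls(2)[OF xy]] .
    moreover have "(x, y) \<in> U" using V xy by blast
    ultimately show "exp (2 * f q) = exp (A (fst q + snd q) + B (fst q - snd q))"
      "exp (2 * f (snd q, fst q)) = exp (A (fst q + snd q) - B (fst q - snd q))"
      using exp_2f exp_2f_swap by (simp_all add: q exp_add exp_diff)
  qed
  have "continuous_on ?V (\<lambda>q. A (fst q + snd q) + B (fst q - snd q))"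
    by (intro continuous_intros cont(1,2))
  then obtain c1 where c1: "\<And>q. q \<in> ?V \<Longrightarrow> 2 * f q = A (fst q + snd q) + B (fst q - snd q) + c1"
    using continuous_logs_differ_by_constant[OF conn cont(3) _ exps(1)] by blast
  have "continuous_on ?V (\<lambda>q. A (fst q + snd q) - B (fst q - snd q))"
    by (intro continuous_intros cont(1,2))
  then obtain c2 where c2: "\<And>q. q \<in> ?V \<Longrightarrow> 2 * f (snd q, fst q) = A (fst q + snd q) - B (fst q - snd q) + c2"
    using continuous_logs_differ_by_constant[OF conn cont(4) _ exps(2)] by blast
  show ?thesis
  proof (rule that[OF \<epsilon> V A(1) B(1)])
    show "2 * f (x, y) = A (x + y) + B (x - y) + c1" "2 * f (y, x) = A (x + y) - B (x - y) + c2"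
      if "x \<in> ball a \<epsilon>" "y \<in> ball b \<epsilon>" for x y
      using c1[of "(x, y)"] c2[of "(x, y)"] that by auto
  qed
qed

lemma partial_derivatives_symmetric:
  assumes ab: "(a, b) \<in> U"
  shows "\<exists>D. ((\<lambda>y. f (a, y)) has_field_derivative D) (at b) \<and>
             ((\<lambda>y. f (b, y)) has_field_derivative D) (at a)"
proof -
  obtain \<epsilon> A B c1 c2 where \<epsilon>: "0 < \<epsilon>" "\<epsilon> \<le> 1" "ball a \<epsilon> \<times> ball b \<epsilon> \<subseteq> U"
    and A: "A holomorphic_on ball (a + b) (2 * \<epsilon>)" and B: "B holomorphic_on ball (a - b) (2 * \<epsilon>)"
    and split: "\<And>x y. x \<in> ball a \<epsilon> \<Longrightarrow> y \<in> ball b \<epsilon> \<Longrightarrow> 2 * f (x, y) = A (x + y) + B (x - y) + c1"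
      "\<And>x y. x \<in> ball a \<epsilon> \<Longrightarrow> y \<in> ball b \<epsilon> \<Longrightarrow> 2 * f (y, x) = A (x + y) - B (x - y) + c2"
    by (rule local_log_decomposition[OF ab zero_less_one]) (rule that)
  have centres: "a \<in> ball a \<epsilon>" "b \<in> ball b \<epsilon>"
    "a + b \<in> ball (a + b) (2 * \<epsilon>)" "a - b \<in> ball (a - b) (2 * \<epsilon>)"
    using \<epsilon>(1) by auto
  have [derivative_intros]: "(A has_field_derivative deriv A (a + b)) (at (a + b))"
    "(B has_field_derivative deriv B (a - b)) (at (a - b))"
    using A B centres(3,4) by (auto intro: holomorphic_derivI)
  define D where "D = (deriv A (a + b) - deriv B (a - b)) / 2"
  have "((\<lambda>y. (A (a + y) + B (a - y) + c1) / 2) has_field_derivative D) (at b)"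
    unfolding D_def by (rule derivative_eq_intros DERIV_chain'[where g = A] DERIV_chain'[where g = B] refl | simp)+
  then have "((\<lambda>y. f (a, y)) has_field_derivative D) (at b)"
    by (rule has_field_derivative_transform_within_open[OF _ open_ball centres(2)])
       (use split(1)[OF centres(1)] in \<open>simp add: field_simps\<close>)
  moreover have "((\<lambda>x. (A (x + b) - B (x - b) + c2) / 2) has_field_derivative D) (at a)"
    unfolding D_def by (rule derivative_eq_intros DERIV_chain'[where g = A] DERIV_chain'[where g = B] refl | simp)+
  then have "((\<lambda>x. f (b, x)) has_field_derivative D) (at a)"
    by (rule has_field_derivative_transform_within_open[OF _ open_ball centres(1)])
       (use split(2)[OF _ centres(2)] in \<open>simp add: field_simps\<close>)
  ultimately show ?thesis by blast
qed

lemma local_primitive: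
  assumes ab: "(a, b) \<in> U" and "\<delta> > 0"
  obtains \<epsilon> P where "0 < \<epsilon>" "\<epsilon> \<le> \<delta>" "ball a \<epsilon> \<times> ball b \<epsilon> \<subseteq> U"
    "\<And>x y. x \<in> ball a \<epsilon> \<Longrightarrow> y \<in> ball b \<epsilon> \<Longrightarrow> ((\<lambda>t. P (t, y)) has_field_derivative f (x, y)) (at x)"
    "\<And>x y. x \<in> ball a \<epsilon> \<Longrightarrow> y \<in> ball b \<epsilon> \<Longrightarrow> ((\<lambda>t. P (x, t)) has_field_derivative f (y, x)) (at y)"
proof -
  obtain \<epsilon> A B c1 c2 where \<epsilon>: "0 < \<epsilon>" "\<epsilon> \<le> \<delta>" "ball a \<epsilon> \<times> ball b \<epsilon> \<subseteq> U"
    and A: "A holomorphic_on ball (a + b) (2 * \<epsilon>)" and B: "B holomorphic_on ball (a - b) (2 * \<epsilon>)"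
    and split: "\<And>x y. x \<in> ball a \<epsilon> \<Longrightarrow> y \<in> ball b \<epsilon> \<Longrightarrow> 2 * f (x, y) = A (x + y) + B (x - y) + c1"
      "\<And>x y. x \<in> ball a \<epsilon> \<Longrightarrow> y \<in> ball b \<epsilon> \<Longrightarrow> 2 * f (y, x) = A (x + y) - B (x - y) + c2"
    by (rule local_log_decomposition[OF assms]) (rule that)
  obtain Ah where Ah: "\<And>u. u \<in> ball (a + b) (2 * \<epsilon>) \<Longrightarrow> (Ah has_field_derivative A u) (at u)"
    by (rule holomorphic_primitive_on_ball[OF A]) (rule that)
  obtain Bh where Bh: "\<And>u. u \<in> ball (a - b) (2 * \<epsilon>) \<Longrightarrow> (Bh has_field_derivative B u) (at u)"
    by (rule holomorphic_primitive_on_ball[OF B]) (rule that)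
  define P where "P q = (Ah (fst q + snd q) + Bh (fst q - snd q) + c1 * fst q + c2 * snd q) / 2" for q
  have "((\<lambda>t. P (t, y)) has_field_derivative f (x, y)) (at x)"
    "((\<lambda>t. P (x, t)) has_field_derivative f (y, x)) (at y)"
    if "x \<in> ball a \<epsilon>" "y \<in> ball b \<epsilon>" for x y
  proof -
    note [derivative_intros] = Ah[OF sum_diff_in_balls(1)[OF that]] Bh[OF sum_diff_in_balls(2)[OF that]]
    have "(A (x + y) + B (x - y) + c1) / 2 = f (x, y)" "(A (x + y) - B (x - y) + c2) / 2 = f (y, x)"
      using split[OF that] by (simp_all add: field_simps)
    moreover have "((\<lambda>t. P (t, y)) has_field_derivative (A (x + y) + B (x - y) + c1) / 2) (at x)"
      "((\<lambda>t. P (x, t)) has_field_derivative (A (x + y) - B (x - y) + c2) / 2) (at y)"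
      unfolding P_def fst_conv snd_conv
      by (rule derivative_eq_intros DERIV_chain'[where g = Ah] DERIV_chain'[where g = Bh] refl | simp)+
    ultimately show "((\<lambda>t. P (t, y)) has_field_derivative f (x, y)) (at x)"
      "((\<lambda>t. P (x, t)) has_field_derivative f (y, x)) (at y)"
      by argo+
  qed
  with \<epsilon> show ?thesis by (rule that)
qed

lemma local_symmetric_primitive:
  assumes "p \<in> U"
  shows "\<exists>V \<Lambda>. open V \<and> p \<in> V \<and> V \<subseteq> U \<and> prod.swap ` V = V \<and>
           (\<forall>q\<in>V. \<Lambda> q = \<Lambda> (prod.swap q)) \<and>
           (\<forall>x y. (x, y) \<in> V \<longrightarrow> ((\<lambda>t. \<Lambda> (t, y)) has_field_derivative f (x, y)) (at x))"
proof -
  obtain a b where p: "p = (a, b)" by (cases p)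
  with assms have ab: "(a, b) \<in> U" by simp
  define \<delta> where "\<delta> = (if a = b then 1 else dist a b / 2)"
  have "\<delta> > 0" by (simp add: \<delta>_def)
  obtain \<epsilon> P where \<epsilon>: "0 < \<epsilon>" "\<epsilon> \<le> \<delta>" "ball a \<epsilon> \<times> ball b \<epsilon> \<subseteq> U"
    and P: "\<And>x y. x \<in> ball a \<epsilon> \<Longrightarrow> y \<in> ball b \<epsilon> \<Longrightarrow> ((\<lambda>t. P (t, y)) has_field_derivative f (x, y)) (at x)"
      "\<And>x y. x \<in> ball a \<epsilon> \<Longrightarrow> y \<in> ball b \<epsilon> \<Longrightarrow> ((\<lambda>t. P (x, t)) has_field_derivative f (y, x)) (at y)"
    by (rule local_primitive[OF ab \<open>\<delta> > 0\<close>]) (rule that)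
  have "ball a \<epsilon> = ball b \<epsilon> \<or> ball a \<epsilon> \<inter> ball b \<epsilon> = {}"
  proof (cases "a = b")
    case False
    then have "2 * \<epsilon> \<le> dist a b" using \<epsilon>(2) by (simp add: \<delta>_def)
    then have "ball a \<epsilon> \<inter> ball b \<epsilon> = {}"
      using dist_triangle_less_add[of a _ \<epsilon> b \<epsilon>] by (force simp: dist_commute)
    then show ?thesis ..
  qed simp
  then obtain \<Lambda> where \<Lambda>: "\<And>q. q \<in> ball a \<epsilon> \<times> ball b \<epsilon> \<union> ball b \<epsilon> \<times> ball a \<epsilon> \<Longrightarrow> \<Lambda> q = \<Lambda> (prod.swap q)"
    "\<And>x y. (x, y) \<in> ball a \<epsilon> \<times> ball b \<epsilon> \<union> ball b \<epsilon> \<times> ball a \<epsilon> \<Longrightarrow>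
       ((\<lambda>t. \<Lambda> (t, y)) has_field_derivative f (x, y)) (at x)"
    using symmetric_primitive_from_partials[OF open_ball open_ball _ P] by blast
  let ?V = "ball a \<epsilon> \<times> ball b \<epsilon> \<union> ball b \<epsilon> \<times> ball a \<epsilon>"
  have "?V \<subseteq> U" using \<epsilon>(3) swap_in_U by blast
  moreover have "prod.swap ` ?V = ?V" by (auto simp: image_Un product_swap)
  ultimately show ?thesis
    using \<epsilon>(1) \<Lambda> by (intro exI[of _ ?V] exI[of _ \<Lambda>]) (auto simp: p intro: open_Un open_Times)
qed

end

lemma half_log_branch_sum_difference:
  assumes "nondeg_periods \<omega>1 \<omega>2" "half_log_branch \<omega>1 \<omega>2 \<alpha> U f" "prod.swap ` U = U"
  shows "sum_difference_log_branch
           {u. wsigma \<omega>1 \<omega>2 (u + \<alpha>) \<noteq> 0 \<and> wsigma \<omega>1 \<omega>2 (u - \<alpha>) \<noteq> 0}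
           (\<lambda>u. wsigma \<omega>1 \<omega>2 (u + \<alpha>) / wsigma \<omega>1 \<omega>2 (u - \<alpha>)) U f"
proof
  let ?\<sigma> = "wsigma \<omega>1 \<omega>2"
  have shifted: "(\<lambda>u. ?\<sigma> (u + \<alpha>)) holomorphic_on A" "(\<lambda>u. ?\<sigma> (u - \<alpha>)) holomorphic_on A" for A
    using wsigma_shift_holomorphic[OF assms(1), of "- \<alpha>"] wsigma_shift_holomorphic[OF assms(1), of \<alpha>]
    by simp_all
  show "open {u. ?\<sigma> (u + \<alpha>) \<noteq> 0 \<and> ?\<sigma> (u - \<alpha>) \<noteq> 0}"
    by (intro open_Collect_conj open_Collect_neq holomorphic_on_imp_continuous_on shifted continuous_on_const)
  show "(\<lambda>u. ?\<sigma> (u + \<alpha>) / ?\<sigma> (u - \<alpha>)) holomorphic_on {u. ?\<sigma> (u + \<alpha>) \<noteq> 0 \<and> ?\<sigma> (u - \<alpha>) \<noteq> 0}"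
    by (intro holomorphic_on_divide shifted) auto
  show "?\<sigma> (- u + \<alpha>) / ?\<sigma> (- u - \<alpha>) * (?\<sigma> (u + \<alpha>) / ?\<sigma> (u - \<alpha>)) = 1"
    if "u \<in> {u. ?\<sigma> (u + \<alpha>) \<noteq> 0 \<and> ?\<sigma> (u - \<alpha>) \<noteq> 0}" for u
  proof -
    have "- u + \<alpha> = - (u - \<alpha>)" "- u - \<alpha> = - (u + \<alpha>)" by simp_all
    then have odd: "?\<sigma> (- u + \<alpha>) = - ?\<sigma> (u - \<alpha>)" "?\<sigma> (- u - \<alpha>) = - ?\<sigma> (u + \<alpha>)"
      by (simp_all only: wsigma_minus[OF assms(1)])
    show ?thesis unfolding odd using that by simp
  qed
  show "open U" "continuous_on U f" using assms(2) by (auto simp: half_log_branch_def)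
  show "prod.swap ` U = U" by (fact assms(3))
  show "x + y \<in> {u. ?\<sigma> (u + \<alpha>) \<noteq> 0 \<and> ?\<sigma> (u - \<alpha>) \<noteq> 0} \<and>
        x - y \<in> {u. ?\<sigma> (u + \<alpha>) \<noteq> 0 \<and> ?\<sigma> (u - \<alpha>) \<noteq> 0} \<and>
        exp (2 * f (x, y)) = ?\<sigma> (x + y + \<alpha>) / ?\<sigma> (x + y - \<alpha>) * (?\<sigma> (x - y + \<alpha>) / ?\<sigma> (x - y - \<alpha>))"
    if "(x, y) \<in> U" for x y
  proof -
    have "bigF \<omega>1 \<omega>2 \<alpha> (x, y) \<noteq> 0" and exp: "exp (2 * f (x, y)) = bigF \<omega>1 \<omega>2 \<alpha> (x, y)"
      using assms(2) that by (auto simp: half_log_branch_def)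
    then have "?\<sigma> (x + y + \<alpha>) \<noteq> 0" "?\<sigma> (x - y + \<alpha>) \<noteq> 0" "?\<sigma> (x + y - \<alpha>) \<noteq> 0" "?\<sigma> (x - y - \<alpha>) \<noteq> 0"
      by (auto simp: bigF_def)
    with exp show ?thesis by (simp add: bigF_def times_divide_times_eq)
  qed
qed

section \<open>The action of a quad-graph\<close>

definition face_term ::
  "(complex \<Rightarrow> complex \<times> complex \<Rightarrow> complex) \<Rightarrow> ('v \<Rightarrow> 'v \<Rightarrow> complex) \<Rightarrow> ('v \<Rightarrow> complex) \<Rightarrow>
   'v \<times> 'v \<times> 'v \<times> 'v \<Rightarrow> complex" where
  "face_term Lam lab X q = (case q of (a, b, c, d) \<Rightarrow> Lam (lab a b - lab a d) (X a, X c))"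

lemma action_eq_sum_face_term: "action Lam lab Q X = (\<Sum>q\<in>Q. face_term Lam lab X q)"
  by (simp add: action_def face_term_def[abs_def])

lemma face_term_update_has_derivative:
  assumes faces: "quad_faces Q black lab" and "q \<in> Q"
    and q: "q = (v, w, w', w'') \<or> q = (w', w'', v, w)"
    and \<gamma>: "\<gamma> = lab v w - lab v w''"
    and V: "open V" "\<And>p. p \<in> V \<Longrightarrow> Lam \<gamma> p = Lam \<gamma> (prod.swap p)" "(X v, X w') \<in> V"
    and D: "((\<lambda>x. Lam \<gamma> (x, X w')) has_field_derivative D) (at (X v))"
  shows "((\<lambda>z. face_term Lam lab (X(v := z)) q) has_field_derivative D) (at (X v))"
  using q
proof
  assume q: "q = (v, w, w', w'')"
  then have "w' \<noteq> v" using faces \<open>q \<in> Q\<close> by (fastforce simp: quad_faces_def)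
  then show ?thesis using D by (simp add: q \<gamma> face_term_def)
next
  assume q: "q = (w', w'', v, w)"
  then have "w' \<noteq> v" "lab w' w'' = lab v w" "lab w' w = lab w'' v"
    using faces \<open>q \<in> Q\<close> by (fastforce simp: quad_faces_def)+
  \<comment> \<open>the face seen from its other black vertex carries the same label difference\<close>
  moreover have "lab w'' v = lab v w''" using faces by (simp add: quad_faces_def)
  ultimately have "(\<lambda>z. face_term Lam lab (X(v := z)) q) = (\<lambda>z. Lam \<gamma> (X w', z))"
    by (simp add: q \<gamma> face_term_def)
  then show ?thesis
    using has_field_derivative_swap_symmetric[OF V D] by simp
qed

lemma action_update_has_derivative:
  fixes Q :: "('v \<times> 'v \<times> 'v \<times> 'v) set"
  assumes faces: "quad_faces Q black lab" and star: "interior_star Q v n w"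
    and local: "\<And>j. j \<in> {1..n} \<Longrightarrow>
       open (V j) \<and> (X v, X (w (2*j))) \<in> V j \<and>
       (\<forall>p\<in>V j. Lam (\<gamma> j) p = Lam (\<gamma> j) (prod.swap p)) \<and>
       ((\<lambda>x. Lam (\<gamma> j) (x, X (w (2*j)))) has_field_derivative D j) (at (X v))"
    and \<gamma>: "\<And>j. \<gamma> j = lab v (w (2*j - 1)) - lab v (w (2*j + 1))"
  shows "((\<lambda>z. action Lam lab Q (X(v := z))) has_field_derivative (\<Sum>j = 1..n. D j)) (at (X v))"
proof -
  define Qv where "Qv = {q \<in> Q. fst q = v \<or> fst (snd (snd q)) = v}"
  obtain \<phi> where \<phi>: "bij_betw \<phi> {1..n} Qv"
    and shape: "\<And>j. j \<in> {1..n} \<Longrightarrow> \<phi> j = (v, w (2*j - 1), w (2*j), w (2*j + 1)) \<or>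
                                       \<phi> j = (w (2*j), w (2*j + 1), v, w (2*j - 1))"
    using star unfolding interior_star_def Qv_def by blast
  have "finite Q" using faces by (simp add: quad_faces_def)
  have away: "face_term Lam lab (X(v := z)) q = face_term Lam lab X q" if "q \<in> Q - Qv" for q z
    using that by (auto simp: Qv_def face_term_def split: prod.splits)
  have "action Lam lab Q (X(v := z)) =
          (\<Sum>q\<in>Q - Qv. face_term Lam lab X q) + (\<Sum>j = 1..n. face_term Lam lab (X(v := z)) (\<phi> j))" for z
  proof -
    have "action Lam lab Q (X(v := z)) =
            (\<Sum>q\<in>Q - Qv. face_term Lam lab (X(v := z)) q) + (\<Sum>q\<in>Qv. face_term Lam lab (X(v := z)) q)"
      unfolding action_eq_sum_face_term using \<open>finite Q\<close> by (intro sum.subset_diff) (auto simp: Qv_def)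
    also have "(\<Sum>q\<in>Q - Qv. face_term Lam lab (X(v := z)) q) = (\<Sum>q\<in>Q - Qv. face_term Lam lab X q)"
      by (intro sum.cong refl away)
    also have "(\<Sum>q\<in>Qv. face_term Lam lab (X(v := z)) q) = (\<Sum>j = 1..n. face_term Lam lab (X(v := z)) (\<phi> j))"
      by (rule sum.reindex_bij_betw[OF \<phi>, symmetric])
    finally show ?thesis .
  qed
  moreover have "((\<lambda>z. face_term Lam lab (X(v := z)) (\<phi> j)) has_field_derivative D j) (at (X v))"
    if "j \<in> {1..n}" for j
    using bij_betw_apply[OF \<phi> that] local[OF that] shape[OF that]
    by (intro face_term_update_has_derivative[OF faces, where w = "w (2*j - 1)" and w'' = "w (2*j + 1)"])
       (auto simp: Qv_def \<gamma>)
  then have "((\<lambda>z. (\<Sum>q\<in>Q - Qv. face_term Lam lab X q) + (\<Sum>j = 1..n. face_term Lam lab (X(v := z)) (\<phi> j)))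
               has_field_derivative 0 + (\<Sum>j = 1..n. D j)) (at (X v))"
    by (intro DERIV_add DERIV_const DERIV_sum) auto
  ultimately show ?thesis by simp
qed

theorem proposition4:
  fixes \<omega>1 \<omega>2 :: complex
  assumes "nondeg_periods \<omega>1 \<omega>2"
  shows
  "(\<forall>\<alpha> U f. half_log_branch \<omega>1 \<omega>2 \<alpha> U f \<and> prod.swap ` U = U \<longrightarrow>
      (\<forall>a b. (a, b) \<in> U \<longrightarrow>
         (\<exists>D. ((\<lambda>y. f (a, y)) has_field_derivative D) (at b) \<and>
              ((\<lambda>y. f (b, y)) has_field_derivative D) (at a))) \<and>
      (\<forall>p\<in>U. \<exists>V \<Lambda>. open V \<and> p \<in> V \<and> V \<subseteq> U \<and> prod.swap ` V = V \<and>
         (\<forall>q\<in>V. \<Lambda> q = \<Lambda> (prod.swap q)) \<and>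
         (\<forall>a b. (a, b) \<in> V \<longrightarrow> ((\<lambda>x. \<Lambda> (x, b)) has_field_derivative f (a, b)) (at a))))
   \<and>
   (\<forall>(Q :: ('v \<times> 'v \<times> 'v \<times> 'v) set) black lab v n w
       (U :: complex \<Rightarrow> (complex \<times> complex) set) f Lam (X :: 'v \<Rightarrow> complex).
      quad_faces Q black lab \<and> black v \<and> interior_star Q v n w \<and>
      (\<forall>\<gamma>. half_log_branch \<omega>1 \<omega>2 \<gamma> (U \<gamma>) (f \<gamma>) \<and> prod.swap ` U \<gamma> = U \<gamma> \<and>
           (\<forall>q\<in>U \<gamma>. Lam \<gamma> q = Lam \<gamma> (prod.swap q)) \<and>
           (\<forall>a b. (a, b) \<in> U \<gamma> \<longrightarrow>
              ((\<lambda>x. Lam \<gamma> (x, b)) has_field_derivative f \<gamma> (a, b)) (at a))) \<and>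
      (\<forall>j\<in>{1..n}. (X v, X (w (2*j))) \<in> U (lab v (w (2*j - 1)) - lab v (w (2*j + 1))))
      \<longrightarrow>
      ((\<lambda>z. action Lam lab Q (X(v := z))) has_field_derivative
         (\<Sum>j = 1..n. f (lab v (w (2*j - 1)) - lab v (w (2*j + 1))) (X v, X (w (2*j)))))
        (at (X v)))"
proof (intro conjI allI impI ballI; elim conjE)
  note branch = half_log_branch_sum_difference[OF assms]
  show "\<exists>D. ((\<lambda>y. f (a, y)) has_field_derivative D) (at b) \<and> ((\<lambda>y. f (b, y)) has_field_derivative D) (at a)"
    if "half_log_branch \<omega>1 \<omega>2 \<alpha> U f" "prod.swap ` U = U" "(a, b) \<in> U" for \<alpha> U f a b
    using sum_difference_log_branch.partial_derivatives_symmetric[OF branch[OF that(1,2)] that(3)] .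
  show "\<exists>V \<Lambda>. open V \<and> p \<in> V \<and> V \<subseteq> U \<and> prod.swap ` V = V \<and> (\<forall>q\<in>V. \<Lambda> q = \<Lambda> (prod.swap q)) \<and>
          (\<forall>a b. (a, b) \<in> V \<longrightarrow> ((\<lambda>x. \<Lambda> (x, b)) has_field_derivative f (a, b)) (at a))"
    if "half_log_branch \<omega>1 \<omega>2 \<alpha> U f" "prod.swap ` U = U" "p \<in> U" for \<alpha> U f p
    using sum_difference_log_branch.local_symmetric_primitive[OF branch[OF that(1,2)] that(3)] .
next
  fix Q :: "('v \<times> 'v \<times> 'v \<times> 'v) set" and black lab v n w U f Lam and X :: "'v \<Rightarrow> complex"
  assume "quad_faces Q black lab" "interior_star Q v n w"
    and "\<forall>\<gamma>. half_log_branch \<omega>1 \<omega>2 \<gamma> (U \<gamma>) (f \<gamma>) \<and> prod.swap ` U \<gamma> = U \<gamma> \<and>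
         (\<forall>q\<in>U \<gamma>. Lam \<gamma> q = Lam \<gamma> (prod.swap q)) \<and>
         (\<forall>a b. (a, b) \<in> U \<gamma> \<longrightarrow> ((\<lambda>x. Lam \<gamma> (x, b)) has_field_derivative f \<gamma> (a, b)) (at a))"
    and "\<forall>j\<in>{1..n}. (X v, X (w (2*j))) \<in> U (lab v (w (2*j - 1)) - lab v (w (2*j + 1)))"
  then show "((\<lambda>z. action Lam lab Q (X(v := z))) has_field_derivative
          (\<Sum>j = 1..n. f (lab v (w (2*j - 1)) - lab v (w (2*j + 1))) (X v, X (w (2*j))))) (at (X v))"
    by (intro action_update_has_derivative[where V = "\<lambda>j. U (lab v (w (2*j - 1)) - lab v (w (2*j + 1)))"])
       (auto simp: half_log_branch_def)
qed

end
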